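(* If an $n$-agent network is $(k+1)$-redundant with $k\ge 0$, then it is $k$-redundant.
   Context: An $n$-agent network: agents $\mathcal V=\{1,\dots,n\}$, each agent $i$ having real matrices $A_i\in\mathbb R^{r_i\times d}$, $b_i\in\mathbb R^{r_i}$. The network is $k$-redundant ($k\in\{0,1,\dots,n-1\}$) if for any $\mathcal S_1,\mathcal S_2\subset\mathcal V$ with $|\mathcal S_1|=|\mathcal S_2|=n-k$, $\arg\min_x\sum_{i\in\mathcal S_1}\|A_ix-b_i\|_2^2=\arg\min_x\sum_{i\in\mathcal S_2}\|A_ix-b_i\|_2^2$ (so $(k+1)$-redundancy presupposes $k+1\le n-1$). *)

theory Defs
  imports "HOL-Analysis.Analysis"
begin

text \<open>Agent i has r i rows; row j of A_i is the vector A i j in R^d (d = CARD('d)),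
  and b_i has entries b i j. Then the squared norm of A_i x - b_i is the sum of the
  squared residuals over the r i rows.\<close>

definition agent_cost :: "(nat \<Rightarrow> nat \<Rightarrow> real^'d) \<Rightarrow> (nat \<Rightarrow> nat \<Rightarrow> real) \<Rightarrow> (nat \<Rightarrow> nat)
    \<Rightarrow> nat \<Rightarrow> real^'d \<Rightarrow> real" where
  "agent_cost A b r i x = (\<Sum>j<r i. (A i j \<bullet> x - b i j)\<^sup>2)"

definition agg_cost :: "(nat \<Rightarrow> nat \<Rightarrow> real^'d) \<Rightarrow> (nat \<Rightarrow> nat \<Rightarrow> real) \<Rightarrow> (nat \<Rightarrow> nat)
    \<Rightarrow> nat set \<Rightarrow> real^'d \<Rightarrow> real" where
  "agg_cost A b r S x = (\<Sum>i\<in>S. agent_cost A b r i x)"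

definition argmin_set :: "('a \<Rightarrow> real) \<Rightarrow> 'a set" where
  "argmin_set f = {x. \<forall>y. f x \<le> f y}"

definition k_redundant :: "nat \<Rightarrow> (nat \<Rightarrow> nat \<Rightarrow> real^'d) \<Rightarrow> (nat \<Rightarrow> nat \<Rightarrow> real)
    \<Rightarrow> (nat \<Rightarrow> nat) \<Rightarrow> nat \<Rightarrow> bool" where
  "k_redundant n A b r k \<longleftrightarrow> k < n \<and>
     (\<forall>S1 S2. S1 \<subseteq> {1..n} \<and> S2 \<subseteq> {1..n} \<and> card S1 = n - k \<and> card S2 = n - k \<longrightarrow>
        argmin_set (agg_cost A b r S1) = argmin_set (agg_cost A b r S2))"

end

theory Submission imports Defs begin

text \<open>Let X be the argmin set of the cost of some (n - k - 1)-subset of agents; it is nonempty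
  because the normal equations of a least-squares problem are always solvable. For an
  (n - k)-subset S, (k + 1)-redundancy gives every S - {i} the argmin set X. Summing over i \<in> S,
  the costs of the S - {i} add up to (|S| - 1) times the cost of S, and a sum of functions sharing
  the nonempty argmin set X again has argmin set X; so S has argmin set X as well.\<close>

lemma least_squares_normal_equations_solvable:
  fixes a :: "'q \<Rightarrow> 'a::euclidean_space" and c :: "'q \<Rightarrow> real"
  assumes "finite I"
  shows "\<exists>x. (\<Sum>q\<in>I. (a q \<bullet> x - c q) *\<^sub>R a q) = 0"
proof -
  define M where "M x = (\<Sum>q\<in>I. (a q \<bullet> x) *\<^sub>R a q)" for x
  define p where "p = (\<Sum>q\<in>I. c q *\<^sub>R a q)"
  have "linear M"
    unfolding M_def by (intro linear_compose_sum ballI linearI) (auto simp: inner_add_right algebra_simps)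
  then have "subspace (range M)"
    using linear_subspace_image subspace_UNIV by blast
  obtain m z where m: "m \<in> span (range M)" and z: "\<And>w. w \<in> span (range M) \<Longrightarrow> orthogonal z w"
    and p: "p = m + z"
    using orthogonal_subspace_decomp_exists by blast
  \<comment> \<open>z \<bullet> M z = 0 forces a q \<bullet> z = 0 for all q, so z is orthogonal to p and hence to itself.\<close>
  have "(\<Sum>q\<in>I. (a q \<bullet> z)\<^sup>2) = z \<bullet> M z"
    by (simp add: M_def inner_sum_right inner_commute power2_eq_square)
  also have "\<dots> = 0"
    using z[of "M z"] by (simp add: span_base orthogonal_def)
  finally have "\<forall>q\<in>I. a q \<bullet> z = 0"
    using assms by (simp add: sum_nonneg_eq_0_iff)
  then have "z \<bullet> p = 0"
    by (simp add: p_def inner_sum_right inner_commute)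
  moreover have "z \<bullet> m = 0"
    using z[OF m] by (simp add: orthogonal_def)
  ultimately have "z = 0"
    using p by (simp add: inner_add_right)
  with m p \<open>subspace (range M)\<close> obtain x where "M x = p"
    by (metis add.right_neutral span_eq_iff rangeE)
  then have "(\<Sum>q\<in>I. (a q \<bullet> x - c q) *\<^sub>R a q) = 0"
    by (simp add: M_def p_def scaleR_left_diff_distrib sum_subtractf)
  then show ?thesis ..
qed

lemma least_squares_minimizer_if_normal_equations:
  fixes a :: "'q \<Rightarrow> 'a::euclidean_space" and c :: "'q \<Rightarrow> real"
  assumes "(\<Sum>q\<in>I. (a q \<bullet> x - c q) *\<^sub>R a q) = 0"
  shows "(\<Sum>q\<in>I. (a q \<bullet> x - c q)\<^sup>2) \<le> (\<Sum>q\<in>I. (a q \<bullet> y - c q)\<^sup>2)"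
proof -
  define d where "d = y - x"
  have "(\<Sum>q\<in>I. (a q \<bullet> y - c q)\<^sup>2)
      = (\<Sum>q\<in>I. (a q \<bullet> x - c q)\<^sup>2 + (a q \<bullet> d)\<^sup>2 + 2 * ((a q \<bullet> x - c q) * (a q \<bullet> d)))"
    by (rule sum.cong) (auto simp: d_def inner_diff_right power2_eq_square algebra_simps)
  also have "\<dots> = (\<Sum>q\<in>I. (a q \<bullet> x - c q)\<^sup>2) + (\<Sum>q\<in>I. (a q \<bullet> d)\<^sup>2)
      + 2 * (d \<bullet> (\<Sum>q\<in>I. (a q \<bullet> x - c q) *\<^sub>R a q))"
    by (simp add: sum.distrib sum_distrib_left inner_sum_right inner_commute)
  also have "\<dots> \<ge> (\<Sum>q\<in>I. (a q \<bullet> x - c q)\<^sup>2)"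
    using assms by (simp add: sum_nonneg)
  finally show ?thesis .
qed

lemma least_squares_has_minimizer:
  fixes a :: "'q \<Rightarrow> 'a::euclidean_space" and c :: "'q \<Rightarrow> real"
  assumes "finite I"
  shows "\<exists>x. \<forall>y. (\<Sum>q\<in>I. (a q \<bullet> x - c q)\<^sup>2) \<le> (\<Sum>q\<in>I. (a q \<bullet> y - c q)\<^sup>2)"
  using least_squares_normal_equations_solvable[OF assms] least_squares_minimizer_if_normal_equations
  by blast

lemma argmin_set_agg_cost_nonempty:
  assumes "finite S"
  shows "argmin_set (agg_cost A b r S) \<noteq> {}"
proof -
  let ?R = "Sigma S (\<lambda>i. {..<r i})"
  have cost: "agg_cost A b r S x = (\<Sum>(i, j)\<in>?R. (A i j \<bullet> x - b i j)\<^sup>2)" for x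
    unfolding agg_cost_def agent_cost_def using assms by (simp add: sum.Sigma)
  obtain x where "\<forall>y. (\<Sum>(i, j)\<in>?R. (A i j \<bullet> x - b i j)\<^sup>2) \<le> (\<Sum>(i, j)\<in>?R. (A i j \<bullet> y - b i j)\<^sup>2)"
    using least_squares_has_minimizer[of ?R "case_prod A" "case_prod b"] assms
    by (auto simp: case_prod_beta')
  then have "x \<in> argmin_set (agg_cost A b r S)"
    unfolding argmin_set_def cost by simp
  then show ?thesis by blast
qed

lemma argmin_set_sum_common:
  fixes g :: "'i \<Rightarrow> 'a \<Rightarrow> real"
  assumes "finite S" "S \<noteq> {}" "X \<noteq> {}" and argmin: "\<And>i. i \<in> S \<Longrightarrow> argmin_set (g i) = X"
  shows "argmin_set (\<lambda>x. \<Sum>i\<in>S. g i x) = X"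
proof
  obtain x0 where x0: "x0 \<in> X" using assms(3) by blast
  have min: "g i x \<le> g i y" if "i \<in> S" "x \<in> X" for i x y
    using argmin[OF that(1)] that(2) unfolding argmin_set_def by blast
  show "X \<subseteq> argmin_set (\<lambda>x. \<Sum>i\<in>S. g i x)"
    unfolding argmin_set_def using min by (auto intro: sum_mono)
  show "argmin_set (\<lambda>x. \<Sum>i\<in>S. g i x) \<subseteq> X"
  proof
    fix y assume "y \<in> argmin_set (\<lambda>x. \<Sum>i\<in>S. g i x)"
    then have "(\<Sum>i\<in>S. g i y - g i x0) \<le> 0"
      unfolding argmin_set_def by (simp add: sum_subtractf)
    moreover have "g i y - g i x0 \<ge> 0" if "i \<in> S" for i
      using min that x0 by auto
    ultimately have "\<forall>i\<in>S. g i y = g i x0"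
      using \<open>finite S\<close> by (metis (no_types, lifting) order_antisym sum_nonneg sum_nonneg_eq_0_iff eq_iff_diff_eq_0)
    moreover obtain i where "i \<in> S" using assms(2) by blast
    ultimately have "y \<in> argmin_set (g i)"
      using min[OF _ x0] unfolding argmin_set_def by simp
    with \<open>i \<in> S\<close> argmin show "y \<in> X" by blast
  qed
qed

lemma argmin_set_mult_pos:
  fixes f :: "'a \<Rightarrow> real"
  assumes "c > 0"
  shows "argmin_set (\<lambda>x. c * f x) = argmin_set f"
  using assms by (simp add: argmin_set_def)

lemma sum_leave_one_out:
  fixes f :: "'i \<Rightarrow> 'a::comm_ring_1"
  assumes "finite S"
  shows "(\<Sum>i\<in>S. sum f (S - {i})) = of_nat (card S - 1) * sum f S"
proof (cases "S = {}")
  case False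
  then have "card S \<ge> 1" using assms by (simp add: Suc_le_eq card_gt_0_iff)
  have "(\<Sum>i\<in>S. sum f (S - {i})) = (\<Sum>i\<in>S. sum f S - f i)"
    using assms by (intro sum.cong) (auto simp: sum_diff1)
  also have "\<dots> = of_nat (card S) * sum f S - sum f S"
    by (simp add: sum_subtractf)
  finally show ?thesis
    using \<open>card S \<ge> 1\<close> by (simp add: of_nat_diff algebra_simps)
qed simp

lemma argmin_set_sum_if_leave_one_out:
  fixes f :: "'i \<Rightarrow> 'a \<Rightarrow> real"
  assumes "finite S" "card S \<ge> 2" "X \<noteq> {}"
    and leave_one_out: "\<And>i. i \<in> S \<Longrightarrow> argmin_set (\<lambda>x. \<Sum>j\<in>S - {i}. f j x) = X"
  shows "argmin_set (\<lambda>x. \<Sum>j\<in>S. f j x) = X"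
proof -
  have "S \<noteq> {}" using assms(2) by auto
  have "real (card S - 1) > 0" using assms(2) by simp
  then have "argmin_set (\<lambda>x. \<Sum>j\<in>S. f j x)
      = argmin_set (\<lambda>x. real (card S - 1) * (\<Sum>j\<in>S. f j x))"
    by (rule argmin_set_mult_pos[symmetric])
  also have "(\<lambda>x. real (card S - 1) * (\<Sum>j\<in>S. f j x)) = (\<lambda>x. \<Sum>i\<in>S. \<Sum>j\<in>S - {i}. f j x)"
  proof
    fix x
    show "real (card S - 1) * (\<Sum>j\<in>S. f j x) = (\<Sum>i\<in>S. \<Sum>j\<in>S - {i}. f j x)"
      using sum_leave_one_out[OF \<open>finite S\<close>, of "\<lambda>j. f j x"] by (simp only:)
  qed
  also have "argmin_set \<dots> = X"
    using \<open>finite S\<close> \<open>S \<noteq> {}\<close> \<open>X \<noteq> {}\<close> leave_one_out by (rule argmin_set_sum_common)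
  finally show ?thesis .
qed

theorem corollary2:
  fixes n k :: nat and A :: "nat \<Rightarrow> nat \<Rightarrow> real^'d" and b :: "nat \<Rightarrow> nat \<Rightarrow> real"
    and r :: "nat \<Rightarrow> nat"
  assumes "k_redundant n A b r (k + 1)"
  shows "k_redundant n A b r k"
proof -
  have "k + 1 < n" and redundant: "\<And>S1 S2. S1 \<subseteq> {1..n} \<Longrightarrow> S2 \<subseteq> {1..n} \<Longrightarrow>
      card S1 = n - (k + 1) \<Longrightarrow> card S2 = n - (k + 1) \<Longrightarrow>
      argmin_set (agg_cost A b r S1) = argmin_set (agg_cost A b r S2)"
    using assms unfolding k_redundant_def by blast+
  define X where "X = argmin_set (agg_cost A b r {1..n - (k + 1)})"
  have "X \<noteq> {}"
    unfolding X_def by (simp add: argmin_set_agg_cost_nonempty)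
  have "argmin_set (agg_cost A b r S) = X" if S: "S \<subseteq> {1..n}" "card S = n - k" for S
  proof -
    have "finite S" using S(1) finite_subset by blast
    have "argmin_set (agg_cost A b r (S - {i})) = X" if "i \<in> S" for i
      unfolding X_def using that S \<open>finite S\<close> by (intro redundant) auto
    moreover have "card S \<ge> 2"
      using S(2) \<open>k + 1 < n\<close> by simp
    ultimately show ?thesis
      using argmin_set_sum_if_leave_one_out[OF \<open>finite S\<close> _ \<open>X \<noteq> {}\<close>, of "agent_cost A b r"]
      unfolding agg_cost_def by blast
  qed
  with \<open>k + 1 < n\<close> show ?thesis
    unfolding k_redundant_def by auto
qed

end
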